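(* Let $G=(V,E)$ be a finite graph and let $T$ be a set of orderings of $V$. Then there exists a strict partial order $\prec$ on $P_f(\mathbb{N}^+)$ such that $T=\{\mathrm{TBLS}(G,\prec,\tau) : \tau \text{ an ordering of } V\}$ if and only if there exists a labeling structure $S=(L,\prec_{GLS},l_0,\mathrm{UPLAB})$ such that $T$ equals the set of all orderings that can be produced by $\mathrm{GLS}(G,S)$.
   Context: $G$ has $n$ vertices; an ordering of $V$ is a bijection $\sigma:\{1,\dots,n\}\to V$. $P_f(\mathbb{N}^+)$ is the set of finite subsets of positive integers. $\mathrm{TBLS}(G,\prec,\tau)$ (for a strict partial order $\prec$ on $P_f(\mathbb{N}^+)$ and ordering $\tau$ of $V$) is the procedure: set $label(v)=\emptyset$ for every $v$; for $i=1,\dots,n$: let Eligible be the set of unnumbered vertices $x$ such that there is no unnumbered vertex $y$ with $label(x)\prec label(y)$; let $v$ be the first vertex of Eligible in $\tau$; set $\sigma(i)=v$ ($v$ becomes numbered); for every unnumbered neighbour $w$ of $v$ replace $label(w)$ by $label(w)\cup\{i\}$; output $\sigma$. A labeling structure is a quadruple $S=(L,\prec_{GLS},l_0,\mathrm{UPLAB})$ where $L$ is an arbitrary set, $\prec_{GLS}$ a strict partial order on $L$, $l_0\in L$, and $\mathrm{UPLAB}:L\times\mathbb{N}^+\to L$ a function. The General Label Search $\mathrm{GLS}(G,S)$ is the nondeterministic procedure: set $l(v)=l_0$ for every $v$; for $i=1,\dots,n$: let Eligible be the set of unnumbered vertices $v$ such that there is no unnumbered $y$ with $l(v)\prec_{GLS}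 l(y)$; choose any $v$ in Eligible; set $\sigma(i)=v$; for every unnumbered neighbour $w$ of $v$ set $l(w)=\mathrm{UPLAB}(l(w),i)$; output $\sigma$. The orderings produced by $\mathrm{GLS}(G,S)$ are all outputs over all possible choices. *)

theory Defs
  imports Main
begin

definition finite_graph :: "'a set \<Rightarrow> ('a \<Rightarrow> 'a \<Rightarrow> bool) \<Rightarrow> bool" where
  "finite_graph V E \<longleftrightarrow> finite V \<and> (\<forall>x y. E x y \<longrightarrow> x \<in> V \<and> y \<in> V)
     \<and> (\<forall>x y. E x y \<longrightarrow> E y x) \<and> (\<forall>x. \<not> E x x)"

text \<open>An ordering sigma of V is represented as the list [sigma(1), ..., sigma(n)].\<close>
definition orderings :: "'a set \<Rightarrow> 'a list set" where
  "orderings V = {xs. distinct xs \<and> set xs = V}"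

definition Pf :: "nat set set" where
  "Pf = {S. finite S \<and> 0 \<notin> S}"

definition strict_po_on :: "'b set \<Rightarrow> ('b \<Rightarrow> 'b \<Rightarrow> bool) \<Rightarrow> bool" where
  "strict_po_on A r \<longleftrightarrow> (\<forall>x\<in>A. \<not> r x x) \<and>
     (\<forall>x\<in>A. \<forall>y\<in>A. \<forall>z\<in>A. r x y \<longrightarrow> r y z \<longrightarrow> r x z)"

text \<open>TBLS: k = remaining steps, i = current step number, lab = current labels,
  num = vertices numbered so far (in order).\<close>
fun tbls_aux :: "'a set \<Rightarrow> ('a \<Rightarrow> 'a \<Rightarrow> bool) \<Rightarrow> (nat set \<Rightarrow> nat set \<Rightarrow> bool) \<Rightarrow> 'a list
     \<Rightarrow> nat \<Rightarrow> nat \<Rightarrow> ('a \<Rightarrow> nat set) \<Rightarrow> 'a list \<Rightarrow> 'a list" where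
  "tbls_aux V E p \<tau> 0 i lab num = num"
| "tbls_aux V E p \<tau> (Suc k) i lab num =
     (let U = V - set num;
          Elig = {x \<in> U. \<not> (\<exists>y\<in>U. p (lab x) (lab y))};
          v = hd (filter (\<lambda>x. x \<in> Elig) \<tau>);
          lab' = (\<lambda>w. if w \<in> U \<and> w \<noteq> v \<and> E v w then lab w \<union> {i} else lab w)
      in tbls_aux V E p \<tau> k (Suc i) lab' (num @ [v]))"

definition TBLS :: "'a set \<Rightarrow> ('a \<Rightarrow> 'a \<Rightarrow> bool) \<Rightarrow> (nat set \<Rightarrow> nat set \<Rightarrow> bool) \<Rightarrow> 'a list \<Rightarrow> 'a list" where
  "TBLS V E p \<tau> = tbls_aux V E p \<tau> (card V) 1 (\<lambda>_. {}) []"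

definition labeling_structure :: "'l set \<Rightarrow> ('l \<Rightarrow> 'l \<Rightarrow> bool) \<Rightarrow> 'l \<Rightarrow> ('l \<Rightarrow> nat \<Rightarrow> 'l) \<Rightarrow> bool" where
  "labeling_structure L p l0 up \<longleftrightarrow> strict_po_on L p \<and> l0 \<in> L \<and>
     (\<forall>l\<in>L. \<forall>i::nat. i > 0 \<longrightarrow> up l i \<in> L)"

text \<open>GLS labels along a run sigma: label of w after the first k steps.\<close>
fun gls_lab :: "('a \<Rightarrow> 'a \<Rightarrow> bool) \<Rightarrow> 'l \<Rightarrow> ('l \<Rightarrow> nat \<Rightarrow> 'l) \<Rightarrow> 'a list \<Rightarrow> nat \<Rightarrow> 'a \<Rightarrow> 'l" where
  "gls_lab E l0 up \<sigma> 0 w = l0"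
| "gls_lab E l0 up \<sigma> (Suc k) w =
     (if w \<notin> set (take (Suc k) \<sigma>) \<and> E (\<sigma> ! k) w
      then up (gls_lab E l0 up \<sigma> k w) (Suc k) else gls_lab E l0 up \<sigma> k w)"

text \<open>All orderings producible by GLS(G,S): at every step i = k+1 the chosen vertex
  sigma(i) is eligible w.r.t. the labels computed along the run.\<close>
definition gls_outputs :: "'a set \<Rightarrow> ('a \<Rightarrow> 'a \<Rightarrow> bool) \<Rightarrow> ('l \<Rightarrow> 'l \<Rightarrow> bool) \<Rightarrow> 'l
     \<Rightarrow> ('l \<Rightarrow> nat \<Rightarrow> 'l) \<Rightarrow> 'a list set" where
  "gls_outputs V E p l0 up = {\<sigma> \<in> orderings V. \<forall>k < length \<sigma>.
      (let U = V - set (take k \<sigma>) in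
        \<sigma> ! k \<in> U \<and> \<not> (\<exists>y\<in>U. p (gls_lab E l0 up \<sigma> k (\<sigma> ! k)) (gls_lab E l0 up \<sigma> k y)))}"

end

theory Submission
  imports Defs "HOL-Library.Countable_Set"
begin

text \<open>
  A TBLS label is the set of positions of the already numbered neighbours. A run of TBLS with
  tie-break order \<open>\<tau>\<close> numbers at each step an unnumbered vertex whose label is maximal, so its
  output is an ordering in which every vertex is maximal at the moment it is numbered; conversely
  such an ordering \<open>\<sigma>\<close> is reproduced by TBLS with \<open>\<tau> = \<sigma>\<close>. Hence both sides of the equivalence
  describe these ``label search orderings''. A GLS label is a function of the TBLS label, namely
  the fold of UPLAB over its elements in increasing order; conversely an infinite label type
  admits an injective encoding of all finite sets of positions, and UPLAB then just inserts the
  step number. In either direction the two searches see the same comparisons between labels.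
\<close>

definition tbls_label :: "('a \<Rightarrow> 'a \<Rightarrow> bool) \<Rightarrow> 'a list \<Rightarrow> 'a \<Rightarrow> nat set" where
  "tbls_label E xs w = {Suc j | j. j < length xs \<and> E (xs ! j) w}"

lemma tbls_label_Nil [simp]: "tbls_label E [] w = {}"
  by (simp add: tbls_label_def)

lemma tbls_label_snoc:
  "tbls_label E (xs @ [v]) w =
     (if E v w then insert (Suc (length xs)) (tbls_label E xs w) else tbls_label E xs w)"
proof -
  have "{j. j < Suc (length xs) \<and> E ((xs @ [v]) ! j) w} =
      {j. j < length xs \<and> E (xs ! j) w} \<union> {j. j = length xs \<and> E v w}"
    by (auto simp: nth_append less_Suc_eq)
  then show ?thesis
    unfolding tbls_label_def by (auto simp: setcompr_eq_image image_Un)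
qed

lemma tbls_label_bounds: "a \<in> tbls_label E xs w \<Longrightarrow> 0 < a \<and> a \<le> length xs"
  by (auto simp: tbls_label_def)

lemma finite_tbls_label: "finite (tbls_label E xs w)"
  by (rule finite_subset[of _ "{..length xs}"]) (auto dest: tbls_label_bounds)

lemma tbls_label_in_Pf: "tbls_label E xs w \<in> Pf"
  using finite_tbls_label tbls_label_bounds by (fastforce simp: Pf_def)

definition eligible ::
    "'a set \<Rightarrow> ('a \<Rightarrow> 'a \<Rightarrow> bool) \<Rightarrow> (nat set \<Rightarrow> nat set \<Rightarrow> bool) \<Rightarrow> 'a list \<Rightarrow> 'a set" where
  "eligible V E p xs =
     {x \<in> V - set xs. \<not> (\<exists>y \<in> V - set xs. p (tbls_label E xs x) (tbls_label E xs y))}"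

definition first_eligible ::
    "'a set \<Rightarrow> ('a \<Rightarrow> 'a \<Rightarrow> bool) \<Rightarrow> (nat set \<Rightarrow> nat set \<Rightarrow> bool) \<Rightarrow> 'a list \<Rightarrow> 'a list \<Rightarrow> 'a" where
  "first_eligible V E p \<tau> xs = hd (filter (\<lambda>x. x \<in> eligible V E p xs) \<tau>)"

definition label_search_orderings ::
    "'a set \<Rightarrow> ('a \<Rightarrow> 'a \<Rightarrow> bool) \<Rightarrow> (nat set \<Rightarrow> nat set \<Rightarrow> bool) \<Rightarrow> 'a list set" where
  "label_search_orderings V E p =
     {\<sigma> \<in> orderings V. \<forall>k < length \<sigma>. \<sigma> ! k \<in> eligible V E p (take k \<sigma>)}"

lemma eligible_nonempty:
  assumes "strict_po_on Pf p" and "finite V" and "\<not> V \<subseteq> set xs"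
  shows "eligible V E p xs \<noteq> {}"
proof -
  let ?R = "\<lambda>x y. p (tbls_label E xs x) (tbls_label E xs y)"
  have "asymp_on (V - set xs) ?R" "transp_on (V - set xs) ?R"
    using assms(1) tbls_label_in_Pf unfolding strict_po_on_def asymp_on_def transp_on_def
    by meson+
  then obtain x where "x \<in> V - set xs" "\<forall>y \<in> V - set xs. \<not> ?R x y"
    using Finite_Set.bex_max_element_with_property[of "V - set xs" ?R "\<lambda>_. True"] assms(2,3)
    by auto
  then show ?thesis
    by (auto simp: eligible_def)
qed

lemma first_eligible_in_eligible:
  assumes "strict_po_on Pf p" and "finite V" and "set \<tau> = V" and "\<not> V \<subseteq> set xs"
  shows "first_eligible V E p \<tau> xs \<in> eligible V E p xs"
proof -
  obtain x where "x \<in> eligible V E p xs"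
    using eligible_nonempty[OF assms(1,2,4)] by blast
  moreover have "eligible V E p xs \<subseteq> set \<tau>"
    using assms(3) by (auto simp: eligible_def)
  ultimately have "filter (\<lambda>x. x \<in> eligible V E p xs) \<tau> \<noteq> []"
    by (auto simp: filter_empty_conv)
  then show ?thesis
    unfolding first_eligible_def using hd_in_set by fastforce
qed

lemma first_eligible_self:
  assumes "\<sigma> \<in> label_search_orderings V E p" and "j < length \<sigma>"
  shows "first_eligible V E p \<sigma> (take j \<sigma>) = \<sigma> ! j"
proof -
  let ?P = "\<lambda>x. x \<in> eligible V E p (take j \<sigma>)"
  have "\<sigma> ! j \<in> eligible V E p (take j \<sigma>)"
    using assms unfolding label_search_orderings_def by blast
  moreover have "filter ?P (take j \<sigma>) = []"
    by (auto simp: filter_empty_conv eligible_def)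
  ultimately have "filter ?P (take j \<sigma> @ \<sigma> ! j # drop (Suc j) \<sigma>) = \<sigma> ! j # filter ?P (drop (Suc j) \<sigma>)"
    by simp
  then show ?thesis
    unfolding first_eligible_def using id_take_nth_drop[OF assms(2)] by simp
qed

lemma tbls_aux_chooses_first_eligible:
  fixes p :: "nat set \<Rightarrow> nat set \<Rightarrow> bool" and \<tau> :: "'a list" and k :: nat
  assumes "\<And>x y. E x y \<Longrightarrow> y \<in> V"
    and "\<forall>w. w \<notin> set num \<longrightarrow> lab w = tbls_label E num w" and "i = Suc (length num)"
  defines "r \<equiv> tbls_aux V E p \<tau> k i lab num"
  shows "length r = length num + k \<and> take (length num) r = num \<and>
    (\<forall>j. length num \<le> j \<longrightarrow> j < length num + k \<longrightarrow> r ! j = first_eligible V E p \<tau> (take j r))"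
  unfolding r_def using assms(2,3)
proof (induction k arbitrary: i lab num)
  case 0
  then show ?case by simp
next
  case (Suc k)
  define v where "v = first_eligible V E p \<tau> num"
  define lab' where "lab' = (\<lambda>w. if w \<in> V - set num \<and> w \<noteq> v \<and> E v w then lab w \<union> {i} else lab w)"
  have eligible: "{x \<in> V - set num. \<not> (\<exists>y \<in> V - set num. p (lab x) (lab y))} = eligible V E p num"
    using Suc.prems(1) by (auto simp: eligible_def)
  have unfold: "tbls_aux V E p \<tau> (Suc k) i lab num = tbls_aux V E p \<tau> k (Suc i) lab' (num @ [v])"
    unfolding tbls_aux.simps Let_def eligible v_def lab'_def first_eligible_def by (rule refl)
  have labels: "\<forall>w. w \<notin> set (num @ [v]) \<longrightarrow> lab' w = tbls_label E (num @ [v]) w"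
    using Suc.prems assms(1)[of v] by (auto simp: lab'_def tbls_label_snoc)
  define r where "r = tbls_aux V E p \<tau> k (Suc i) lab' (num @ [v])"
  from Suc.IH[OF labels] Suc.prems(2) have IH:
    "length r = Suc (length num) + k" "take (Suc (length num)) r = num @ [v]"
    "\<And>j. Suc (length num) \<le> j \<Longrightarrow> j < Suc (length num) + k \<Longrightarrow>
       r ! j = first_eligible V E p \<tau> (take j r)"
    unfolding r_def by auto
  have prefix: "take (length num) r = num"
    using arg_cong[OF IH(2), of "take (length num)"] by simp
  have "r ! length num = v"
    using arg_cong[OF IH(2), of "\<lambda>xs. xs ! length num"] by simp
  then have "r ! j = first_eligible V E p \<tau> (take j r)"
    if "length num \<le> j" "j < length num + Suc k" for j
    using IH(3) that prefix v_def by (cases "j = length num") auto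
  then show ?case
    unfolding unfold r_def[symmetric] using IH(1) prefix by simp
qed

lemma TBLS_chooses_first_eligible:
  assumes "finite_graph V E"
  shows "length (TBLS V E p \<tau>) = card V"
    and "j < card V \<Longrightarrow> TBLS V E p \<tau> ! j = first_eligible V E p \<tau> (take j (TBLS V E p \<tau>))"
proof -
  have "\<And>x y. E x y \<Longrightarrow> y \<in> V"
    using assms by (auto simp: finite_graph_def)
  from tbls_aux_chooses_first_eligible[OF this, where num="[]" and lab="\<lambda>_. {}" and i=1
      and k="card V" and p=p and \<tau>=\<tau>]
  show "length (TBLS V E p \<tau>) = card V"
    and "j < card V \<Longrightarrow> TBLS V E p \<tau> ! j = first_eligible V E p \<tau> (take j (TBLS V E p \<tau>))"
    by (simp_all add: TBLS_def)
qed

lemma distinct_if_nth_notin_take: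
  assumes "\<forall>j < length xs. xs ! j \<notin> set (take j xs)"
  shows "distinct xs"
proof -
  have "distinct (take j xs)" if "j \<le> length xs" for j
    using that assms by (induction j) (auto simp: take_Suc_conv_app_nth)
  then show ?thesis
    by (metis order_refl take_all)
qed

lemma TBLS_in_label_search_orderings:
  assumes "finite_graph V E" and "strict_po_on Pf p" and "\<tau> \<in> orderings V"
  shows "TBLS V E p \<tau> \<in> label_search_orderings V E p"
proof -
  define r where "r = TBLS V E p \<tau>"
  have "finite V"
    using assms(1) by (simp add: finite_graph_def)
  note r_first = TBLS_chooses_first_eligible[OF assms(1), where p=p and \<tau>=\<tau>, folded r_def]
  have eligible: "r ! j \<in> eligible V E p (take j r)" if "j < length r" for j
  proof -
    have "card (set (take j r)) < card V"
      using card_length[of "take j r"] that r_first(1) by simp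
    then have "\<not> V \<subseteq> set (take j r)"
      using card_mono by fastforce
    then show ?thesis
      using first_eligible_in_eligible[OF assms(2) \<open>finite V\<close>] assms(3) r_first that
      by (simp add: orderings_def)
  qed
  then have "distinct r"
    by (intro distinct_if_nth_notin_take) (auto simp: eligible_def)
  have "set r \<subseteq> V"
    using eligible by (auto simp: in_set_conv_nth eligible_def)
  with \<open>distinct r\<close> have "set r = V"
    using \<open>finite V\<close> r_first(1) by (metis card_subset_eq distinct_card)
  then show ?thesis
    using \<open>distinct r\<close> eligible unfolding r_def label_search_orderings_def orderings_def by auto
qed

lemma TBLS_fixes_label_search_ordering:
  assumes "finite_graph V E" and "\<sigma> \<in> label_search_orderings V E p"
  shows "TBLS V E p \<sigma> = \<sigma>"
proof -
  define r where "r = TBLS V E p \<sigma>"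
  note r_first = TBLS_chooses_first_eligible[OF assms(1), where p=p and \<tau>=\<sigma>, folded r_def]
  have "length \<sigma> = card V"
    using assms(2) distinct_card[of \<sigma>] by (simp add: label_search_orderings_def orderings_def)
  have "take j r = take j \<sigma>" if "j \<le> card V" for j
    using that
  proof (induction j)
    case 0
    then show ?case by simp
  next
    case (Suc j)
    then have "r ! j = \<sigma> ! j"
      using r_first(2)[of j] first_eligible_self[OF assms(2)] \<open>length \<sigma> = card V\<close> by simp
    then show ?case
      using Suc r_first(1) \<open>length \<sigma> = card V\<close> by (simp add: take_Suc_conv_app_nth)
  qed
  then show ?thesis
    using r_first(1) \<open>length \<sigma> = card V\<close> unfolding r_def by (metis order_refl take_all)
qed

lemma TBLS_image_eq_label_search_orderings:
  assumes "finite_graph V E" and "strict_po_on Pf p"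
  shows "{TBLS V E p \<tau> | \<tau>. \<tau> \<in> orderings V} = label_search_orderings V E p"
proof
  show "{TBLS V E p \<tau> | \<tau>. \<tau> \<in> orderings V} \<subseteq> label_search_orderings V E p"
    using TBLS_in_label_search_orderings[OF assms] by blast
  show "label_search_orderings V E p \<subseteq> {TBLS V E p \<tau> | \<tau>. \<tau> \<in> orderings V}"
  proof
    fix \<sigma> assume "\<sigma> \<in> label_search_orderings V E p"
    then have "\<sigma> = TBLS V E p \<sigma>" and "\<sigma> \<in> orderings V"
      using TBLS_fixes_label_search_ordering[OF assms(1)] by (auto simp: label_search_orderings_def)
    then show "\<sigma> \<in> {TBLS V E p \<tau> | \<tau>. \<tau> \<in> orderings V}"
      by blast
  qed
qed

lemma gls_lab_eq_label_encoding:
  assumes h_empty: "h {} = l0"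
    and h_insert: "\<And>A i. finite A \<Longrightarrow> \<forall>a \<in> A. a < i \<Longrightarrow> h (insert i A) = up (h A) i"
  shows "k \<le> length \<sigma> \<Longrightarrow> w \<notin> set (take k \<sigma>) \<Longrightarrow>
    gls_lab E l0 up \<sigma> k w = h (tbls_label E (take k \<sigma>) w)"
proof (induction k)
  case 0
  then show ?case by (simp add: h_empty)
next
  case (Suc k)
  have take_Suc: "take (Suc k) \<sigma> = take k \<sigma> @ [\<sigma> ! k]"
    using Suc.prems(1) by (simp add: take_Suc_conv_app_nth)
  then have IH: "gls_lab E l0 up \<sigma> k w = h (tbls_label E (take k \<sigma>) w)"
    using Suc by simp
  have "\<forall>a \<in> tbls_label E (take k \<sigma>) w. a < Suc k"
    using tbls_label_bounds[of _ E "take k \<sigma>" w] by fastforce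
  then have "h (insert (Suc k) (tbls_label E (take k \<sigma>) w)) = up (h (tbls_label E (take k \<sigma>) w)) (Suc k)"
    by (rule h_insert[OF finite_tbls_label])
  then show ?case
    using IH Suc.prems take_Suc by (simp add: tbls_label_snoc min_absorb2)
qed

lemma gls_outputs_eq_label_search_orderings:
  assumes h_empty: "h {} = l0"
    and h_insert: "\<And>A i. finite A \<Longrightarrow> \<forall>a \<in> A. a < i \<Longrightarrow> h (insert i A) = up (h A) i"
    and h_order: "\<And>A B. finite A \<Longrightarrow> finite B \<Longrightarrow> pG (h A) (h B) = p A B"
  shows "gls_outputs V E pG l0 up = label_search_orderings V E p"
proof -
  have "(let U = V - set (take k \<sigma>) in
      \<sigma> ! k \<in> U \<and> \<not> (\<exists>y \<in> U. pG (gls_lab E l0 up \<sigma> k (\<sigma> ! k)) (gls_lab E l0 up \<sigma> k y)))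
    \<longleftrightarrow> \<sigma> ! k \<in> eligible V E p (take k \<sigma>)"
    if "k < length \<sigma>" for \<sigma> k
  proof -
    have "gls_lab E l0 up \<sigma> k w = h (tbls_label E (take k \<sigma>) w)" if "w \<notin> set (take k \<sigma>)" for w
      using gls_lab_eq_label_encoding[OF h_empty h_insert less_imp_le[OF \<open>k < length \<sigma>\<close>] that] .
    then show ?thesis
      by (auto simp: Let_def eligible_def h_order finite_tbls_label)
  qed
  then show ?thesis
    unfolding gls_outputs_def label_search_orderings_def by blast
qed

lemma strict_po_on_pullback:
  assumes "strict_po_on L r" and "\<And>a. a \<in> A \<Longrightarrow> h a \<in> L"
  shows "strict_po_on A (\<lambda>a b. r (h a) (h b))"
  using assms unfolding strict_po_on_def by blast

lemma strict_po_on_image: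
  assumes "strict_po_on A r" and "\<And>a b. a \<in> A \<Longrightarrow> b \<in> A \<Longrightarrow> r' (f a) (f b) = r a b"
  shows "strict_po_on (f ` A) r'"
  unfolding strict_po_on_def
proof (intro conjI ballI impI)
  show "\<not> r' x x" if "x \<in> f ` A" for x
    using that assms unfolding strict_po_on_def by auto
  show "r' x z" if "x \<in> f ` A" "y \<in> f ` A" "z \<in> f ` A" "r' x y" "r' y z" for x y z
  proof -
    from that(1-3) obtain a b c where "a \<in> A" "b \<in> A" "c \<in> A" "x = f a" "y = f b" "z = f c"
      by blast
    with that(4,5) assms show ?thesis
      unfolding strict_po_on_def by metis
  qed
qed

lemma sorted_list_of_set_insert_greater:
  assumes "finite A" and "\<forall>a \<in> A. a < (i::nat)"
  shows "sorted_list_of_set (insert i A) = sorted_list_of_set A @ [i]"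
  using assms
  by (subst sorted_list_of_set_unique[symmetric]) (auto simp: sorted_wrt_append)

lemma Pf_order_of_labeling_structure:
  assumes "labeling_structure L pG l0 up"
  obtains p where "strict_po_on Pf p" and "gls_outputs V E pG l0 up = label_search_orderings V E p"
proof -
  define h where "h A = foldl up l0 (sorted_list_of_set A)" for A
  have foldl_in_L: "foldl up l xs \<in> L" if "l \<in> L" and "\<forall>i \<in> set xs. 0 < i" for l xs
    using that assms by (induction xs arbitrary: l) (auto simp: labeling_structure_def)
  have h_in_L: "h A \<in> L" if "A \<in> Pf" for A
  proof -
    have "\<forall>i \<in> set (sorted_list_of_set A). 0 < i"
      using that by (auto simp: Pf_def intro: gr0I)
    then show ?thesis
      unfolding h_def using foldl_in_L assms by (simp add: labeling_structure_def)
  qed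
  have "strict_po_on L pG"
    using assms by (simp add: labeling_structure_def)
  then have "strict_po_on Pf (\<lambda>A B. pG (h A) (h B))"
    using h_in_L by (rule strict_po_on_pullback)
  moreover have "gls_outputs V E pG l0 up = label_search_orderings V E (\<lambda>A B. pG (h A) (h B))"
    by (rule gls_outputs_eq_label_search_orderings)
      (simp_all add: h_def sorted_list_of_set_insert_greater del: sorted_list_of_set_insert_remove)
  ultimately show ?thesis
    using that by blast
qed

lemma labeling_structure_of_Pf_order:
  assumes "strict_po_on Pf p" and "infinite (UNIV :: 'l set)"
  obtains L :: "'l set" and pG l0 up
  where "labeling_structure L pG l0 up"
    and "gls_outputs V E pG l0 up = label_search_orderings V E p"
proof -
  define F where "F = {A :: nat set. finite A}"
  obtain f :: "nat \<Rightarrow> 'l" where "inj f"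
    using infinite_countable_subset[OF assms(2)] by blast
  define e where "e = f \<circ> to_nat_on F"
  have "inj_on e F"
    unfolding e_def F_def using countable_Collect_finite \<open>inj f\<close>
    by (intro comp_inj_on inj_on_to_nat_on) (auto intro: inj_on_subset)
  then have decode: "inv_into F e (e A) = A" if "finite A" for A
    using that by (simp add: F_def)
  define pG where "pG a b = p (inv_into F e a) (inv_into F e b)" for a b
  define up where "up l i = e (insert i (inv_into F e l))" for l i
  have "strict_po_on (e ` Pf) pG"
    using assms(1) by (rule strict_po_on_image) (simp add: pG_def decode Pf_def)
  moreover have "up (e A) i \<in> e ` Pf" if "A \<in> Pf" and "0 < i" for A i
    using that by (simp add: up_def decode Pf_def)
  ultimately have "labeling_structure (e ` Pf) pG (e {}) up"
    by (simp add: labeling_structure_def Pf_def)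
  moreover have "gls_outputs V E pG (e {}) up = label_search_orderings V E p"
    by (rule gls_outputs_eq_label_search_orderings) (auto simp: pG_def up_def decode)
  ultimately show ?thesis
    using that by blast
qed

theorem theorem9:
  fixes V :: "'a set" and E :: "'a \<Rightarrow> 'a \<Rightarrow> bool" and T :: "'a list set"
  assumes "finite_graph V E"
    and "T \<subseteq> orderings V"
    and "infinite (UNIV :: 'l set)"
  shows "(\<exists>p. strict_po_on Pf p \<and> T = {TBLS V E p \<tau> | \<tau>. \<tau> \<in> orderings V})
     \<longleftrightarrow> (\<exists>(L :: 'l set) pG l0 up. labeling_structure L pG l0 up \<and> T = gls_outputs V E pG l0 up)"
proof
  assume "\<exists>p. strict_po_on Pf p \<and> T = {TBLS V E p \<tau> | \<tau>. \<tau> \<in> orderings V}"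
  then obtain p where p: "strict_po_on Pf p" and "T = {TBLS V E p \<tau> | \<tau>. \<tau> \<in> orderings V}"
    by blast
  then have "T = label_search_orderings V E p"
    using TBLS_image_eq_label_search_orderings[OF assms(1)] by simp
  with labeling_structure_of_Pf_order[OF p assms(3)]
  show "\<exists>(L :: 'l set) pG l0 up. labeling_structure L pG l0 up \<and> T = gls_outputs V E pG l0 up"
    by metis
next
  assume "\<exists>(L :: 'l set) pG l0 up. labeling_structure L pG l0 up \<and> T = gls_outputs V E pG l0 up"
  then obtain L :: "'l set" and pG l0 up
    where "labeling_structure L pG l0 up" and "T = gls_outputs V E pG l0 up"
    by blast
  then obtain p where "strict_po_on Pf p" and "T = label_search_orderings V E p"
    using Pf_order_of_labeling_structure by metis
  then show "\<exists>p. strict_po_on Pf p \<and> T = {TBLS V E p \<tau> | \<tau>. \<tau> \<in> orderings V}"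
    using TBLS_image_eq_label_search_orderings[OF assms(1)] by auto
qed

end
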